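(* For any hypothesis class $\mathcal{H}$ with $|\mathcal{H}|<\infty$ and any integer $k\ge0$, \[ \mathrm{ELdim}(\mathcal{H},k)\le\max\Big\{t:\binom{t}{\le k+1}\le|\mathcal{H}|\Big\}. \]
   Context: Hypotheses are maps $\mathcal{X}\to\{-1,+1\}$; $\binom{t}{\le j}=\sum_{i=0}^{j}\binom{t}{i}$. Extended mistake tree w.r.t. $\mathcal{H}$: a finite full binary tree (possibly a single leaf) in which each internal node $v$ is labeled by $x_v\in\mathcal{X}$ and has two solid downward edges, to its left child (label $-1$) and right child (label $+1$), plus one dashed downward edge to one of its two children; each leaf is labeled by some $h\in\mathcal{H}$ with $h(x_v)$ equal to the direction label at every internal node $v$ on the root-to-leaf path. A root-to-leaf path chooses at each internal node one downward edge; its length is its number of edges. The tree is $(k,m)$-difficult if every root-to-leaf path using at most $k$ solid edges has length at least $m$. $\mathrm{ELdim}(\mathcal{H},k)$ is the supremum of $m$ such that a $(k,m)$-difficult extended mistake tree w.r.t. $\mathcal{H}$ exists. *)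

theory Defs
  imports Main "HOL-Library.Extended_Nat"
begin

definition hypothesis :: "('x \<Rightarrow> int) \<Rightarrow> bool" where
  "hypothesis h \<longleftrightarrow> (\<forall>x. h x \<in> {-1, 1})"

text \<open>A node carries its instance x_v, a flag telling
  to which child the dashed edge points (False = left child, True = right child),
  and its left child (label -1) and right child (label +1).\<close>

datatype ('x, 'h) etree =
    ELeaf 'h
  | ENode 'x bool "('x, 'h) etree" "('x, 'h) etree"

fun valid_etree :: "('x \<Rightarrow> int) set \<Rightarrow> ('x, 'x \<Rightarrow> int) etree \<Rightarrow> bool" where
  "valid_etree S (ELeaf h) = (h \<in> S)"
| "valid_etree S (ENode x d l r) =
     (valid_etree {h \<in> S. h x = -1} l \<and> valid_etree {h \<in> S. h x = 1} r)"

datatype edge = SolidL | SolidR | Dashed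

fun is_rtl_path :: "('x, 'h) etree \<Rightarrow> edge list \<Rightarrow> bool" where
  "is_rtl_path (ELeaf h) p = (p = [])"
| "is_rtl_path (ENode x d l r) [] = False"
| "is_rtl_path (ENode x d l r) (e # p) =
     (case e of SolidL \<Rightarrow> is_rtl_path l p
              | SolidR \<Rightarrow> is_rtl_path r p
              | Dashed \<Rightarrow> is_rtl_path (if d then r else l) p)"

definition num_solid :: "edge list \<Rightarrow> nat" where
  "num_solid p = length (filter (\<lambda>e. e \<noteq> Dashed) p)"

definition difficult :: "nat \<Rightarrow> nat \<Rightarrow> ('x, 'h) etree \<Rightarrow> bool" where
  "difficult k m t \<longleftrightarrow>
     (\<forall>p. is_rtl_path t p \<and> num_solid p \<le> k \<longrightarrow> m \<le> length p)"

definition ELdim :: "('x \<Rightarrow> int) set \<Rightarrow> nat \<Rightarrow> enat" where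
  "ELdim H k = Sup {enat m | m. \<exists>t. valid_etree H t \<and> difficult k m t}"

end

theory Submission
  imports Defs
begin

text \<open>Write \<open>\<Phi> k m = (\<Sum>i\<le>k. m choose i)\<close>. At the root of a \<open>(k, m+1)\<close>-difficult tree, the
  subtree behind the dashed edge is still \<open>(k, m)\<close>-difficult, while either subtree reached by a
  solid edge is \<open>(k-1, m)\<close>-difficult. The two subtrees are valid for the disjoint parts of the
  class on which the root instance is labelled \<open>-1\<close> resp. \<open>+1\<close>, so by induction on the tree
  the class has at least \<open>\<Phi> (k+1) m + \<Phi> k m = \<Phi> (k+1) (m+1)\<close> elements (Pascal's rule);
  the base case \<open>\<Phi> 0 m = 1\<close> holds because a valid tree needs a nonempty class.
  The bound never uses that hypotheses are \<open>\<plusminus>1\<close>-valued.\<close>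

lemma sum_choose_atMost_Suc_Suc:
  "(\<Sum>i\<le>Suc k. Suc m choose i) = (\<Sum>i\<le>Suc k. m choose i) + (\<Sum>i\<le>k. m choose i)"
  by (induction k) (simp_all add: sum.atMost_Suc)

lemma sum_zero_choose_atMost [simp]: "(\<Sum>i\<le>k. 0 choose i) = 1"
  by (induction k) simp_all

lemma le_sum_choose_atMost_Suc: "m \<le> (\<Sum>i\<le>Suc k. m choose i)"
proof -
  have "m = m choose 1" by simp
  also have "\<dots> \<le> (\<Sum>i\<le>Suc k. m choose i)" by (rule member_le_sum) auto
  finally show ?thesis .
qed

lemma valid_etree_card_pos: "valid_etree S t \<Longrightarrow> finite S \<Longrightarrow> 0 < card S"
proof (induction t arbitrary: S)
  case (ELeaf h)
  then show ?case by (auto simp: card_gt_0_iff)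
next
  case (ENode x d l r)
  then have "0 < card {h \<in> S. h x = -1}" by auto
  also have "\<dots> \<le> card S" using ENode.prems by (intro card_mono) auto
  finally show ?case .
qed

lemma card_split_le:
  fixes S :: "('x \<Rightarrow> int) set"
  assumes "finite S"
  shows "card {h \<in> S. h x = -1} + card {h \<in> S. h x = 1} \<le> card S"
proof -
  have "card {h \<in> S. h x = -1} + card {h \<in> S. h x = 1}
      = card ({h \<in> S. h x = -1} \<union> {h \<in> S. h x = 1})"
    using assms by (subst card_Un_disjoint) auto
  also have "\<dots> \<le> card S" using assms by (intro card_mono) auto
  finally show ?thesis .
qed

lemma difficult_ELeaf: "difficult k m (ELeaf h) \<longleftrightarrow> m = 0"
  by (auto simp: difficult_def num_solid_def)

lemma difficult_dashed_child:
  assumes "difficult k (Suc m) (ENode x d l r)"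
  shows "difficult k m (if d then r else l)"
  unfolding difficult_def
proof (intro allI impI)
  fix p assume "is_rtl_path (if d then r else l) p \<and> num_solid p \<le> k"
  then have "Suc m \<le> length (Dashed # p)"
    using assms[unfolded difficult_def, rule_format, of "Dashed # p"] by (auto simp: num_solid_def)
  then show "m \<le> length p" by simp
qed

lemma difficult_left_child:
  assumes "difficult (Suc k) (Suc m) (ENode x d l r)"
  shows "difficult k m l"
  unfolding difficult_def
proof (intro allI impI)
  fix p assume "is_rtl_path l p \<and> num_solid p \<le> k"
  then have "Suc m \<le> length (SolidL # p)"
    using assms[unfolded difficult_def, rule_format, of "SolidL # p"] by (auto simp: num_solid_def)
  then show "m \<le> length p" by simp
qed

lemma difficult_right_child:
  assumes "difficult (Suc k) (Suc m) (ENode x d l r)"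
  shows "difficult k m r"
  unfolding difficult_def
proof (intro allI impI)
  fix p assume "is_rtl_path r p \<and> num_solid p \<le> k"
  then have "Suc m \<le> length (SolidR # p)"
    using assms[unfolded difficult_def, rule_format, of "SolidR # p"] by (auto simp: num_solid_def)
  then show "m \<le> length p" by simp
qed

lemma valid_difficult_card_bound:
  "valid_etree S t \<Longrightarrow> finite S \<Longrightarrow> difficult k m t \<Longrightarrow> (\<Sum>i\<le>Suc k. m choose i) \<le> card S"
proof (induction t arbitrary: S k m)
  case (ELeaf h)
  then show ?case
    using valid_etree_card_pos[OF ELeaf.prems(1,2)] by (simp add: difficult_ELeaf del: sum.atMost_Suc)
next
  case (ENode x d l r)
  let ?L = "{h \<in> S. h x = -1}" and ?R = "{h \<in> S. h x = 1}"
  have valid: "valid_etree ?L l" "valid_etree ?R r" and fin: "finite ?L" "finite ?R"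
    using ENode.prems by auto
  show ?case
  proof (cases m)
    case 0
    then show ?thesis
      using valid_etree_card_pos[OF ENode.prems(1,2)] by (simp del: sum.atMost_Suc)
  next
    case (Suc m')
    have hard: "difficult k (Suc m') (ENode x d l r)" using ENode.prems(3) Suc by simp
    have dashed: "(\<Sum>i\<le>Suc k. m' choose i) \<le> card (if d then ?R else ?L)"
      using ENode.IH(1)[OF valid(1) fin(1)] ENode.IH(2)[OF valid(2) fin(2)]
        difficult_dashed_child[OF hard] by (cases d) auto
    have solid: "(\<Sum>i\<le>k. m' choose i) \<le> card (if d then ?L else ?R)"
    proof (cases k)
      case 0
      then show ?thesis using valid_etree_card_pos[OF valid(1) fin(1)]
          valid_etree_card_pos[OF valid(2) fin(2)] by simp
    next
      case (Suc k')
      then show ?thesis using hard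
          ENode.IH(1)[OF valid(1) fin(1) difficult_left_child]
          ENode.IH(2)[OF valid(2) fin(2) difficult_right_child] by simp
    qed
    have "(\<Sum>i\<le>Suc k. m choose i) = (\<Sum>i\<le>Suc k. m' choose i) + (\<Sum>i\<le>k. m' choose i)"
      using Suc sum_choose_atMost_Suc_Suc by simp
    also have "\<dots> \<le> card ?L + card ?R" using dashed solid by (cases d) auto
    also have "\<dots> \<le> card S" using card_split_le[OF ENode.prems(2)] .
    finally show ?thesis .
  qed
qed

lemma le_Greatest_sum_choose:
  assumes "(\<Sum>i\<le>Suc k. m choose i) \<le> n"
  shows "m \<le> (GREATEST t. (\<Sum>i\<le>Suc k. t choose i) \<le> n)"
  using assms by (rule Greatest_le_nat) (use le_sum_choose_atMost_Suc le_trans in blast)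

theorem mainTheorem8:
  fixes H :: "('x \<Rightarrow> int) set" and k :: nat
  assumes "\<forall>h\<in>H. hypothesis h"
    and "finite H"
  shows "ELdim H k \<le> enat (GREATEST t. (\<Sum>i\<le>k+1. t choose i) \<le> card H)"
  unfolding ELdim_def
proof (rule Sup_least)
  fix y assume "y \<in> {enat m | m. \<exists>t. valid_etree H t \<and> difficult k m t}"
  then obtain m t where "y = enat m" "valid_etree H t" "difficult k m t" by auto
  with valid_difficult_card_bound[OF _ \<open>finite H\<close>] le_Greatest_sum_choose
  show "y \<le> enat (GREATEST t. (\<Sum>i\<le>k+1. t choose i) \<le> card H)" by simp
qed

end
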